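(* Let $d\ge2$ and let $p_1,\dots,p_{d+1}$ be the vertices of a regular $d$-simplex inscribed in the unit sphere centered at the origin of $\mathbb{R}^d$. For each $i$, let $q_i$ be the point on the ray from the origin through the circumcenter of the facet $[p_1,\dots,p_{i-1},p_{i+1},\dots,p_{d+1}]$ at distance $\rho$ from the origin, where $\rho>20d$. For each $i\in\{1,\dots,d+1\}$, let $a$ and $\rho'$ be the center and radius of the circumsphere of the $d$-simplex $[p_1,\dots,p_{i-1},q_i,p_{i+1},\dots,p_{d+1}]$. Then $\|a\|-\rho'>\frac{1}{10d}$. *)

theory Defs
  imports "HOL-Analysis.Analysis"
begin

text \<open>A (possibly lower-dimensional) sphere through all points of S, centered in the
  affine hull of S: c is the circumcenter and r the circumradius of S.\<close>
definition circumsphere :: "'a::euclidean_space set \<Rightarrow> 'a \<Rightarrow> real \<Rightarrow> bool" where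
  "circumsphere S c r \<longleftrightarrow> c \<in> affine hull S \<and> (\<forall>x\<in>S. dist c x = r)"

definition regular_simplex :: "(nat \<Rightarrow> 'a::euclidean_space) \<Rightarrow> nat \<Rightarrow> bool" where
  "regular_simplex p m \<longleftrightarrow> inj_on p {1..m+1} \<and> \<not> affine_dependent (p ` {1..m+1}) \<and>
     (\<exists>s. \<forall>i\<in>{1..m+1}. \<forall>j\<in>{1..m+1}. i \<noteq> j \<longrightarrow> dist (p i) (p j) = s)"

end

(* Unit vectors p_1, ..., p_(d+1) spanning a regular simplex in R^d have a common pairwise
   inner product g, so every p_i has inner product 1 + d g with their sum; affine independence
   rules out a common hyperplane, hence the sum vanishes and g = -1/d. The facet opposite p_i
   then has circumcenter -p_i/d, so q_i = -rho p_i and the new simplex is symmetric about the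
   axis through p_i. Its circumcenter t p_i is fixed by |t p_i - p_j|^2 = t^2 + 2t/d + 1 =
   (rho + t)^2, i.e. 2t(rho - 1/d) = 1 - rho^2, and ||a|| - rho' = -2t - rho =
   (rho/d - 1)/(rho - 1/d), which exceeds 1/(10d) as soon as rho/d > 20. *)
theory Submission
  imports Defs
begin

lemma circumsphere_unique:
  fixes S :: "'a::euclidean_space set"
  assumes a: "circumsphere S a r" and b: "circumsphere S b r'"
  shows "b = a" "r' = r"
proof -
  define k where "k = (b \<bullet> b - a \<bullet> a + r\<^sup>2 - r'\<^sup>2) / 2"
  have "S \<subseteq> {x. (b - a) \<bullet> x = k}"
  proof
    fix x assume "x \<in> S"
    then have "dist a x ^ 2 = r\<^sup>2" "dist b x ^ 2 = r'\<^sup>2"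
      using a b by (auto simp: circumsphere_def)
    then show "x \<in> {x. (b - a) \<bullet> x = k}"
      by (simp add: k_def dist_norm power2_norm_eq_inner inner_diff_left inner_diff_right inner_commute)
  qed
  then have "affine hull S \<subseteq> {x. (b - a) \<bullet> x = k}"
    by (intro hull_minimal) (auto simp: affine_hyperplane)
  then have "(b - a) \<bullet> a = k" "(b - a) \<bullet> b = k"
    using a b by (auto simp: circumsphere_def)
  then have "(b - a) \<bullet> (b - a) = 0" by (simp add: inner_diff_right)
  then show "b = a" by simp
  have "S \<noteq> {}"
    using a by (auto simp: circumsphere_def)
  then obtain x where "x \<in> S" by blast
  then show "r' = r" using a b \<open>b = a\<close> by (auto simp: circumsphere_def)
qed

lemma affine_independent_in_hyperplane_card_le:
  fixes A :: "'a::euclidean_space set"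
  assumes "\<not> affine_dependent A" "A \<subseteq> {x. w \<bullet> x = c}" "w \<noteq> 0"
  shows "card A \<le> DIM('a)"
proof -
  have "int (card A) \<le> aff_dim {x. w \<bullet> x = c} + 1"
    using independent_card_le_aff_dim assms(1,2) by blast
  then show ?thesis using assms(3) by simp
qed

lemma regular_simplex_unit_inner:
  fixes p :: "nat \<Rightarrow> 'a::euclidean_space"
  assumes regular: "regular_simplex p DIM('a)"
    and unit: "\<forall>i\<in>{1..DIM('a)+1}. norm (p i) = 1"
  shows "sum p {1..DIM('a)+1} = 0"
    and "\<And>i j. i \<in> {1..DIM('a)+1} \<Longrightarrow> j \<in> {1..DIM('a)+1} \<Longrightarrow> i \<noteq> j \<Longrightarrow>
           p i \<bullet> p j = - 1 / DIM('a)"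
proof -
  define I where "I = {1..DIM('a)+1}"
  obtain s where s: "\<forall>i\<in>I. \<forall>j\<in>I. i \<noteq> j \<longrightarrow> dist (p i) (p j) = s"
    using regular unfolding regular_simplex_def I_def by blast
  define g where "g = 1 - s\<^sup>2 / 2"
  have g: "p i \<bullet> p j = g" if "i \<in> I" "j \<in> I" "i \<noteq> j" for i j
  proof -
    have "s\<^sup>2 = (norm (p i - p j))\<^sup>2"
      using s that by (simp add: dist_norm)
    also have "\<dots> = 2 - 2 * (p i \<bullet> p j)"
      using unit that
      by (simp add: I_def power2_norm_eq_inner inner_diff_left inner_diff_right inner_commute norm_eq_1)
    finally show ?thesis by (simp add: g_def field_simps)
  qed
  have sum_inner: "sum p I \<bullet> p i = 1 + DIM('a) * g" if "i \<in> I" for i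
  proof -
    have "finite I" "card (I - {i}) = DIM('a)"
      using that by (simp_all add: I_def)
    have "sum p I \<bullet> p i = (\<Sum>j\<in>I. p j \<bullet> p i)"
      by (simp add: inner_sum_left)
    also have "\<dots> = p i \<bullet> p i + (\<Sum>j\<in>I - {i}. p j \<bullet> p i)"
      using that \<open>finite I\<close> by (simp add: sum.remove)
    also have "(\<Sum>j\<in>I - {i}. p j \<bullet> p i) = (\<Sum>j\<in>I - {i}. g)"
      using g that by (intro sum.cong) auto
    finally show ?thesis
      using unit that \<open>card (I - {i}) = DIM('a)\<close> by (simp add: I_def norm_eq_1)
  qed
  have "sum p I = 0"
  proof (rule ccontr)
    assume "sum p I \<noteq> 0"
    moreover have "\<not> affine_dependent (p ` I)"
      using regular by (simp add: regular_simplex_def I_def)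
    moreover have "p ` I \<subseteq> {x. sum p I \<bullet> x = 1 + DIM('a) * g}"
      using sum_inner by auto
    ultimately have "card (p ` I) \<le> DIM('a)"
      using affine_independent_in_hyperplane_card_le by blast
    moreover have "card (p ` I) = DIM('a) + 1"
      using regular by (simp add: regular_simplex_def card_image I_def)
    ultimately show False by simp
  qed
  then show "sum p {1..DIM('a)+1} = 0" by (simp add: I_def)
  have "1 \<in> I" by (simp add: I_def)
  then have "g = - 1 / DIM('a)"
    using sum_inner[of 1] \<open>sum p I = 0\<close> by (simp add: field_simps)
  then show "p i \<bullet> p j = - 1 / DIM('a)"
    if "i \<in> {1..DIM('a)+1}" "j \<in> {1..DIM('a)+1}" "i \<noteq> j" for i j
    using g that by (simp add: I_def)
qed

lemma centroid_in_affine_hull: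
  fixes S :: "'a::real_vector set"
  assumes "finite S" "S \<noteq> {}"
  shows "(1 / card S) *\<^sub>R (\<Sum>x\<in>S. x) \<in> affine hull S"
  unfolding affine_hull_finite[OF assms(1)]
  using assms by (intro CollectI exI[of _ "\<lambda>_. 1 / card S"]) (simp add: scaleR_sum_right)

lemma regular_simplex_facet_circumsphere:
  fixes p :: "nat \<Rightarrow> 'a::euclidean_space"
  assumes regular: "regular_simplex p DIM('a)"
    and unit: "\<forall>i\<in>{1..DIM('a)+1}. norm (p i) = 1"
    and i: "i \<in> {1..DIM('a)+1}"
  shows "circumsphere (p ` ({1..DIM('a)+1} - {i})) ((- 1 / DIM('a)) *\<^sub>R p i)
           (sqrt (1 - 1 / DIM('a)\<^sup>2))"
proof -
  define I where "I = {1..DIM('a)+1}"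
  define F where "F = p ` (I - {i})"
  have inj: "inj_on p (I - {i})"
    using regular by (auto simp: regular_simplex_def I_def intro: inj_on_subset)
  have card: "card F = DIM('a)"
    unfolding F_def card_image[OF inj] using i by (simp add: I_def)
  have "(\<Sum>x\<in>F. x) = sum p (I - {i})"
    unfolding F_def using sum.reindex[OF inj, of "\<lambda>x. x"] by simp
  also have "\<dots> = sum p I - p i"
    using i by (simp add: sum_diff1 I_def)
  also have "\<dots> = - p i"
    using regular_simplex_unit_inner(1)[OF regular unit] by (simp add: I_def)
  finally have "(- 1 / DIM('a)) *\<^sub>R p i = (1 / card F) *\<^sub>R (\<Sum>x\<in>F. x)"
    by (simp add: card)
  also have "\<dots> \<in> affine hull F"
    using card card_gt_0_iff[of F] by (intro centroid_in_affine_hull) simp_all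
  finally have hull: "(- 1 / DIM('a)) *\<^sub>R p i \<in> affine hull F" .
  have "dist ((- 1 / DIM('a)) *\<^sub>R p i) (p j) = sqrt (1 - 1 / DIM('a)\<^sup>2)"
    if "j \<in> I" "j \<noteq> i" for j
  proof -
    have "p i \<bullet> p j = - 1 / DIM('a)" "p j \<bullet> p i = - 1 / DIM('a)"
      "p i \<bullet> p i = 1" "p j \<bullet> p j = 1"
      using regular_simplex_unit_inner(2)[OF regular unit] unit i that
      by (auto simp: I_def norm_eq_1)
    then have "((- 1 / DIM('a)) *\<^sub>R p i - p j) \<bullet> ((- 1 / DIM('a)) *\<^sub>R p i - p j)
               = 1 - 1 / DIM('a)\<^sup>2"
      by (simp add: inner_diff_left inner_diff_right field_simps power2_eq_square)
    then show ?thesis by (simp add: dist_norm norm_eq_sqrt_inner)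
  qed
  with hull show ?thesis
    by (auto simp: circumsphere_def F_def I_def)
qed

lemma circumsphere_insert_on_axis:
  fixes u :: "'a::euclidean_space" and \<delta> \<rho> t :: real
  assumes u: "norm u = 1"
    and F: "\<And>x. x \<in> F \<Longrightarrow> norm x = 1 \<and> x \<bullet> u = - \<delta>"
    and hull: "(- \<delta>) *\<^sub>R u \<in> affine hull F"
    and t: "2 * t * (\<rho> - \<delta>) = 1 - \<rho>\<^sup>2" and "\<rho> \<noteq> \<delta>" and "0 \<le> \<rho> + t"
  shows "circumsphere (insert ((- \<rho>) *\<^sub>R u) F) (t *\<^sub>R u) (\<rho> + t)"
proof -
  define T where "T = insert ((- \<rho>) *\<^sub>R u) F"
  define s where "s = (t + \<delta>) / (\<delta> - \<rho>)"
  have "s * (\<delta> - \<rho>) = t + \<delta>"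
    using \<open>\<rho> \<noteq> \<delta>\<close> by (simp add: s_def)
  then have "- s * \<rho> - (1 - s) * \<delta> = t"
    by (simp add: algebra_simps)
  then have "t *\<^sub>R u = s *\<^sub>R ((- \<rho>) *\<^sub>R u) + (1 - s) *\<^sub>R ((- \<delta>) *\<^sub>R u)"
    by (simp add: algebra_simps flip: scaleR_add_left)
  also have "\<dots> \<in> affine hull T"
    using hull hull_mono[of F T] by (intro mem_affine[OF affine_affine_hull]) (auto simp: T_def hull_inc)
  finally have "t *\<^sub>R u \<in> affine hull T" .
  moreover have "dist (t *\<^sub>R u) x = \<rho> + t" if "x \<in> T" for x
  proof (cases "x \<in> F")
    case True
    then have "x \<bullet> x = 1" "x \<bullet> u = - \<delta>" "u \<bullet> x = - \<delta>"
      using F[OF True] inner_commute[of u x] by (auto simp: norm_eq_1)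
    then have "(t *\<^sub>R u - x) \<bullet> (t *\<^sub>R u - x) = t\<^sup>2 + 2 * t * \<delta> + 1"
      using u by (simp add: inner_diff_left inner_diff_right norm_eq_1 power2_eq_square algebra_simps)
    also have "\<dots> = (\<rho> + t)\<^sup>2"
      using t by (simp add: algebra_simps power2_eq_square)
    finally show ?thesis
      using \<open>0 \<le> \<rho> + t\<close> by (simp add: dist_norm norm_eq_sqrt_inner)
  next
    case False
    then have "t *\<^sub>R u - x = (\<rho> + t) *\<^sub>R u"
      using that by (simp add: T_def algebra_simps)
    then show ?thesis
      using u \<open>0 \<le> \<rho> + t\<close> by (simp add: dist_norm)
  qed
  ultimately show ?thesis
    by (simp add: circumsphere_def T_def)
qed

lemma axis_offset_bounds:
  fixes \<delta> \<rho> t :: real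
  assumes "0 < \<delta>" "\<delta> \<le> 1" "20 < \<rho> * \<delta>" and t: "2 * t * (\<rho> - \<delta>) = 1 - \<rho>\<^sup>2"
  shows "t < 0" "0 < \<rho> + t" "\<delta> / 10 < - t - (\<rho> + t)"
proof -
  have "\<rho> * \<delta> \<le> \<rho>"
    using mult_le_cancel_left2 mult_neg_pos assms(1-3) by fastforce
  then have "20 < \<rho>" using assms(3) by linarith
  then have "\<delta> < \<rho>" "1 < \<rho>\<^sup>2" using assms(2) by auto
  then have "2 * t * (\<rho> - \<delta>) < 0" using t by simp
  then show "t < 0" using \<open>\<delta> < \<rho>\<close> by (simp add: mult_less_0_iff)
  have "\<delta>\<^sup>2 \<le> 1" using assms(1,2) by (simp add: power_le_one)
  moreover have "2 * (\<rho> + t) * (\<rho> - \<delta>) = (\<rho> - \<delta>)\<^sup>2 + (1 - \<delta>\<^sup>2)"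
    using t by (simp add: algebra_simps power2_eq_square)
  ultimately have "0 < 2 * (\<rho> + t) * (\<rho> - \<delta>)"
    using \<open>\<delta> < \<rho>\<close> by (simp add: add_pos_nonneg)
  then show "0 < \<rho> + t" using \<open>\<delta> < \<rho>\<close> by (simp add: zero_less_mult_iff)
  have "\<delta> / 10 * (\<rho> - \<delta>) \<le> \<rho> * \<delta> / 10"
    by (simp add: algebra_simps)
  then have "\<delta> / 10 * (\<rho> - \<delta>) < \<rho> * \<delta> - 1"
    using assms(3) by linarith
  also have "\<rho> * \<delta> - 1 = (- t - (\<rho> + t)) * (\<rho> - \<delta>)"
    using t by (simp add: algebra_simps power2_eq_square)
  finally show "\<delta> / 10 < - t - (\<rho> + t)"
    using \<open>\<delta> < \<rho>\<close> by simp
qed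

theorem lemma3p18:
  fixes p q :: "nat \<Rightarrow> real ^ 'n" and \<rho> :: real
  assumes "CARD('n) \<ge> 2"
    and "regular_simplex p CARD('n)"
    and "\<forall>i\<in>{1..CARD('n)+1}. norm (p i) = 1"
    and "\<rho> > 20 * real CARD('n)"
    and "\<forall>i\<in>{1..CARD('n)+1}. \<exists>c r. circumsphere (p ` ({1..CARD('n)+1} - {i})) c r
            \<and> c \<noteq> 0 \<and> q i = (\<rho> / norm c) *\<^sub>R c"
  shows "\<forall>i\<in>{1..CARD('n)+1}. \<exists>a \<rho>'.
           circumsphere (insert (q i) (p ` ({1..CARD('n)+1} - {i}))) a \<rho>'
         \<and> (\<forall>b r. circumsphere (insert (q i) (p ` ({1..CARD('n)+1} - {i}))) b r \<longrightarrow> b = a \<and> r = \<rho>')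
         \<and> norm a - \<rho>' > 1 / (10 * real CARD('n))"
proof (intro ballI)
  fix i assume i: "i \<in> {1..CARD('n)+1}"
  define \<delta> where "\<delta> = 1 / real CARD('n)"
  define F where "F = p ` ({1..CARD('n)+1} - {i})"
  define t where "t = (1 - \<rho>\<^sup>2) / (2 * (\<rho> - \<delta>))"
  have regular: "regular_simplex p DIM(real^'n)"
    and unit: "\<forall>i\<in>{1..DIM(real^'n)+1}. norm (p i) = 1" and i': "i \<in> {1..DIM(real^'n)+1}"
    using assms(2,3) i by simp_all
  have \<delta>: "0 < \<delta>" "\<delta> \<le> 1" "20 < \<rho> * \<delta>"
    using assms(4) by (auto simp: \<delta>_def field_simps)
  have "\<delta> < \<rho>"
    using assms(1,4) \<delta>(2) by linarith
  then have "t * (2 * (\<rho> - \<delta>)) = 1 - \<rho>\<^sup>2"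
    by (simp add: t_def)
  then have t_eq: "2 * t * (\<rho> - \<delta>) = 1 - \<rho>\<^sup>2"
    by (simp add: mult_ac)
  note bounds = axis_offset_bounds[OF \<delta> t_eq]
  have facet: "circumsphere F ((- \<delta>) *\<^sub>R p i) (sqrt (1 - \<delta>\<^sup>2))"
    using regular_simplex_facet_circumsphere[OF regular unit i'] by (simp add: F_def \<delta>_def power_divide)
  obtain c r where c: "circumsphere F c r" "q i = (\<rho> / norm c) *\<^sub>R c"
    using assms(5) i unfolding F_def by blast
  have "c = (- \<delta>) *\<^sub>R p i"
    using circumsphere_unique(1)[OF facet c(1)] .
  then have q: "q i = (- \<rho>) *\<^sub>R p i"
    using c(2) unit i' \<delta>(1) by simp
  have "norm x = 1 \<and> x \<bullet> p i = - \<delta>" if "x \<in> F" for x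
    using regular_simplex_unit_inner(2)[OF regular unit] unit i' that by (auto simp: F_def \<delta>_def)
  then have sphere: "circumsphere (insert (q i) F) (t *\<^sub>R p i) (\<rho> + t)"
    unfolding q using facet unit i' t_eq \<open>\<delta> < \<rho>\<close> bounds(2)
    by (intro circumsphere_insert_on_axis) (auto simp: circumsphere_def)
  moreover have "norm (t *\<^sub>R p i) - (\<rho> + t) > 1 / (10 * real CARD('n))"
    using bounds(1,3) unit i' by (simp add: \<delta>_def)
  ultimately show "\<exists>a \<rho>'. circumsphere (insert (q i) (p ` ({1..CARD('n)+1} - {i}))) a \<rho>'
         \<and> (\<forall>b r. circumsphere (insert (q i) (p ` ({1..CARD('n)+1} - {i}))) b r \<longrightarrow> b = a \<and> r = \<rho>')
         \<and> norm a - \<rho>' > 1 / (10 * real CARD('n))"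
    unfolding F_def[symmetric] using circumsphere_unique by blast
qed

end
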